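(* Any locally compact group $G$ that is approximable by finite quasigroups is unimodular (its left and right Haar measures coincide).
   Context: A finite quasigroup is a finite set $H$ with a binary operation $\odot$ such that for all $a,b\in H$ each of the equations $a\odot x=b$ and $x\odot a=b$ has a unique solution $x\in H$. Approximability: let $C\subseteq G$ be compact, $U$ a neighborhood of the unit, and $(H,\odot)$ a finite algebra. $(H,j)$, $j:H\to G$, is a $(C,U)$-approximation of $G$ if $C\subseteq j(H)U$ and for all $x,y\in H$ with $j(x),j(y),j(x)j(y)\in C$ one has $j(x\odot y)\in j(x)j(y)U$. $G$ is approximable by finite quasigroups if for every compact $C$ and every neighborhood $U$ of the unit there is a $(C,U)$-approximation $(H,j)$ with $H$ a finite quasigroup and $j$ injective. *)

theory Defs
  imports "HOL-Analysis.Analysis" "HOL-Probability.Probability"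
begin

text \<open>A topological group is a type of class topological_group_add
(a possibly non-commutative group written additively, with unit 0, continuous
addition and negation).\<close>

definition locally_compact_group :: "'a::{topological_group_add,t2_space} itself \<Rightarrow> bool" where
  "locally_compact_group _ \<longleftrightarrow> locally_compact_space (euclidean :: 'a topology)"

text \<open>Radon measure on the Borel sets (Folland's convention): finite on compact sets,
outer regular on Borel sets, inner regular on open sets.\<close>

definition radon_measure :: "'a::topological_space measure \<Rightarrow> bool" where
  "radon_measure M \<longleftrightarrow>
     sets M = sets borel \<and>
     (\<forall>K. compact K \<longrightarrow> emeasure M K < \<infinity>) \<and>
     (\<forall>A\<in>sets borel. emeasure M A = (INF U\<in>{U. open U \<and> A \<subseteq> U}. emeasure M U)) \<and>
     (\<forall>U. open U \<longrightarrow> emeasure M U = (SUP K\<in>{K. compact K \<and> K \<subseteq> U}. emeasure M K))"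

definition left_haar_measure :: "'a::topological_group_add measure \<Rightarrow> bool" where
  "left_haar_measure M \<longleftrightarrow>
     radon_measure M \<and> emeasure M UNIV \<noteq> 0 \<and>
     (\<forall>g. \<forall>A\<in>sets borel. emeasure M ((\<lambda>x. g + x) ` A) = emeasure M A)"

definition right_haar_measure :: "'a::topological_group_add measure \<Rightarrow> bool" where
  "right_haar_measure M \<longleftrightarrow>
     radon_measure M \<and> emeasure M UNIV \<noteq> 0 \<and>
     (\<forall>g. \<forall>A\<in>sets borel. emeasure M ((\<lambda>x. x + g) ` A) = emeasure M A)"

definition unimodular :: "'a::topological_group_add itself \<Rightarrow> bool" where
  "unimodular _ \<longleftrightarrow> (\<forall>M::'a measure. left_haar_measure M \<longleftrightarrow> right_haar_measure M)"

text \<open>Finite quasigroup on a finite carrier H (finite sets are encoded as subsets of nat).\<close>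

definition finite_quasigroup :: "nat set \<Rightarrow> (nat \<Rightarrow> nat \<Rightarrow> nat) \<Rightarrow> bool" where
  "finite_quasigroup H op \<longleftrightarrow> finite H \<and>
     (\<forall>a\<in>H. \<forall>b\<in>H. op a b \<in> H) \<and>
     (\<forall>a\<in>H. \<forall>b\<in>H. (\<exists>!x. x \<in> H \<and> op a x = b) \<and> (\<exists>!x. x \<in> H \<and> op x a = b))"

definition CU_approximation ::
  "'a::group_add set \<Rightarrow> 'a set \<Rightarrow> nat set \<Rightarrow> (nat \<Rightarrow> nat \<Rightarrow> nat) \<Rightarrow> (nat \<Rightarrow> 'a) \<Rightarrow> bool" where
  "CU_approximation C U H op j \<longleftrightarrow>
     C \<subseteq> {j h + u | h u. h \<in> H \<and> u \<in> U} \<and>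
     (\<forall>x\<in>H. \<forall>y\<in>H. j x \<in> C \<and> j y \<in> C \<and> j x + j y \<in> C \<longrightarrow>
        j (op x y) \<in> {j x + j y + u | u. u \<in> U})"

definition approximable_by_finite_quasigroups :: "'a::topological_group_add itself \<Rightarrow> bool" where
  "approximable_by_finite_quasigroups _ \<longleftrightarrow>
     (\<forall>(C::'a set) U. compact C \<and> (\<exists>V. open V \<and> 0 \<in> V \<and> V \<subseteq> U) \<longrightarrow>
        (\<exists>H op j. finite_quasigroup H op \<and> inj_on j H \<and> CU_approximation C U H op j))"

end

(*
  Let M be a left Haar measure, K compact and g a group element; the group is written
  additively. Fix a compact neighbourhood Wb of the unit, a slightly larger open Wa, and a
  finite quasigroup H with j : H -> G approximating the group on a large compact set.
  Left multiplication by an element of H is a bijection of H that approximately translates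
  the sets j x + Wa, so the number of translates j x + Wa containing a point is roughly
  constant: some c bounds it from below on K + g, while c also bounds from above the number of
  translates j x + Wb containing a point of a neighbourhood N of K of almost the same measure.
  Right multiplication by an element approximating -g maps the translates j x + Wa meeting
  K + g injectively to translates j x + Wb contained in N. Double counting gives
  M(K + g) M(Wb) <= M(N) M(Wa), and in the limit M(K + g) <= M(K). Inner and outer regularity
  extend this to all Borel sets, and applying it to -g as well makes M right invariant. The
  reflection x -> -x turns right Haar measures into left ones, which gives the converse.
*)

theory Submission
  imports Defs
begin

section \<open>Translations and neighbourhoods of the unit\<close>

lemma image_eq_vimage_inverse:
  assumes "\<And>x. g (f x) = x" "\<And>y. f (g y) = y"
  shows "f ` A = g -` A"
  using assms by (simp add: set_eq_iff image_iff) metis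

lemma
  fixes a :: "'a::group_add"
  shows left_translation_eq_vimage: "(+) a ` A = (+) (-a) -` A"
    and right_translation_eq_vimage: "(\<lambda>x. x + a) ` A = (\<lambda>x. x + -a) -` A"
    and uminus_image_eq_vimage: "uminus ` A = uminus -` A"
  by (auto intro!: image_eq_vimage_inverse simp: add.assoc)

lemma left_translation_iff [simp]: "y \<in> (+) a ` A \<longleftrightarrow> -a + y \<in> (A::'a::group_add set)"
  by (simp add: left_translation_eq_vimage)

lemma
  fixes A :: "'a::topological_group_add set"
  assumes "open A"
  shows open_left_translation: "open ((+) a ` A)"
    and open_right_translation: "open ((\<lambda>x. x + a) ` A)"
    and open_uminus_image: "open (uminus ` A)"
  unfolding left_translation_eq_vimage right_translation_eq_vimage uminus_image_eq_vimage
  by (auto intro!: open_vimage assms continuous_intros)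

lemma
  fixes A :: "'a::topological_group_add set"
  assumes "A \<in> sets borel"
  shows borel_left_translation: "(+) a ` A \<in> sets borel"
    and borel_right_translation: "(\<lambda>x. x + a) ` A \<in> sets borel"
    and borel_uminus_image: "uminus ` A \<in> sets borel"
  unfolding left_translation_eq_vimage right_translation_eq_vimage uminus_image_eq_vimage
  by (auto intro!: measurable_sets_borel[OF borel_measurable_continuous_onI] assms continuous_intros)

lemma
  fixes A :: "'a::topological_group_add set"
  assumes "compact A"
  shows compact_right_translation: "compact ((\<lambda>x. x + a) ` A)"
    and compact_uminus_image: "compact (uminus ` A)"
  by (auto intro!: compact_continuous_image assms continuous_intros)

lemma compact_set_plus:
  fixes A B :: "'a::topological_group_add set"
  assumes "compact A" "compact B"
  shows "compact (A + B)"
proof -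
  have "A + B = (\<lambda>p. fst p + snd p) ` (A \<times> B)"
    by (force simp: set_plus_def)
  then show ?thesis
    by (auto intro!: compact_continuous_image compact_Times assms continuous_intros)
qed

lemma zero_neighbourhood_uniform_on_compact:
  fixes f :: "'a::topological_group_add \<Rightarrow> 'a \<Rightarrow> 'b::topological_space \<Rightarrow> 'c::topological_space"
  assumes f: "continuous_on UNIV (\<lambda>p. f (fst (fst p)) (snd (fst p)) (snd p))"
    and K: "compact K" and N: "open N" "\<And>k. k \<in> K \<Longrightarrow> f 0 0 k \<in> N"
  obtains V where "open V" "0 \<in> V" "\<And>v w k. v \<in> V \<Longrightarrow> w \<in> V \<Longrightarrow> k \<in> K \<Longrightarrow> f v w k \<in> N"
proof -
  let ?F = "\<lambda>p. f (fst (fst p)) (snd (fst p)) (snd p)"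
  have W: "open (?F -` N)"
    using open_vimage[OF N(1) f] .
  have sub: "{(0, 0)} \<times> K \<subseteq> ?F -` N"
    using N(2) by auto
  have "\<exists>X. (0, 0) \<in> X \<and> open X \<and> X \<times> K \<subseteq> ?F -` N"
    by (rule Elementary_Topology.tube_lemma[OF K W sub])
  then obtain X where X: "(0, 0) \<in> X" "open X" "X \<times> K \<subseteq> ?F -` N"
    by blast
  obtain A B where AB: "open A" "open B" "(0, 0) \<in> A \<times> B" "A \<times> B \<subseteq> X"
    using open_prod_elim[OF X(2,1)] by blast
  show ?thesis
  proof (rule that[of "A \<inter> B"])
    show "open (A \<inter> B)" "0 \<in> A \<inter> B"
      using AB(1-3) by auto
    fix v w k assume "v \<in> A \<inter> B" "w \<in> A \<inter> B" "k \<in> K"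
    then have "((v, w), k) \<in> X \<times> K"
      using AB(4) by auto
    then show "f v w k \<in> N"
      using X(3) by auto
  qed
qed

lemma zero_neighbourhood_add_subset:
  fixes N :: "'a::topological_group_add set"
  assumes "open N" "0 \<in> N"
  obtains Z where "open Z" "0 \<in> Z" "\<And>a b. a \<in> Z \<Longrightarrow> b \<in> Z \<Longrightarrow> a + b \<in> N"
proof -
  obtain Z where "open Z" "0 \<in> Z" "\<And>a b k. a \<in> Z \<Longrightarrow> b \<in> Z \<Longrightarrow> k \<in> {0::'a} \<Longrightarrow> a + b + k \<in> N"
    by (rule zero_neighbourhood_uniform_on_compact[of "\<lambda>a b k. a + b + k" "{0}" N])
      (use assms in \<open>auto intro!: continuous_intros\<close>)
  then show ?thesis
    using that by fastforce
qed

lemma compact_add_zero_neighbourhood: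
  fixes K N :: "'a::topological_group_add set"
  assumes "compact K" "open N" "K \<subseteq> N"
  obtains Z where "open Z" "0 \<in> Z"
    "\<And>k z1 z2 z3 z4. k \<in> K \<Longrightarrow> z1 \<in> Z \<Longrightarrow> z2 \<in> Z \<Longrightarrow> z3 \<in> Z \<Longrightarrow> z4 \<in> Z \<Longrightarrow>
       k + z1 + z2 + z3 + z4 \<in> N"
proof -
  obtain Z' where Z': "open Z'" "0 \<in> Z'" "\<And>v w k. v \<in> Z' \<Longrightarrow> w \<in> Z' \<Longrightarrow> k \<in> K \<Longrightarrow> k + v + w \<in> N"
    by (rule zero_neighbourhood_uniform_on_compact[of "\<lambda>v w k. k + v + w" K N])
      (use assms in \<open>auto intro!: continuous_intros\<close>)
  obtain Z where Z: "open Z" "0 \<in> Z" "\<And>a b. a \<in> Z \<Longrightarrow> b \<in> Z \<Longrightarrow> a + b \<in> Z'"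
    using zero_neighbourhood_add_subset[OF Z'(1,2)] by blast
  show ?thesis
  proof (rule that[OF Z(1,2)])
    fix k z1 z2 z3 z4 assume "k \<in> K" "z1 \<in> Z" "z2 \<in> Z" "z3 \<in> Z" "z4 \<in> Z"
    then have "k + (z1 + z2) + (z3 + z4) \<in> N"
      using Z(3) Z'(3) by blast
    then show "k + z1 + z2 + z3 + z4 \<in> N"
      by (simp add: add.assoc)
  qed
qed

lemma compact_conjugates_zero_neighbourhood:
  fixes L V :: "'a::topological_group_add set"
  assumes "compact L" "open V" "0 \<in> V"
  obtains U where "open U" "0 \<in> U" "\<And>y u. y \<in> L \<Longrightarrow> u \<in> U \<Longrightarrow> -y + u + y \<in> V"
proof -
  obtain U where "open U" "0 \<in> U" "\<And>u w y. u \<in> U \<Longrightarrow> w \<in> U \<Longrightarrow> y \<in> L \<Longrightarrow> -y + u + y \<in> V"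
    by (rule zero_neighbourhood_uniform_on_compact[of "\<lambda>u w y. -y + u + y" L V])
      (use assms in \<open>auto intro!: continuous_intros\<close>)
  then show ?thesis
    using that by blast
qed

lemma compact_two_sided_zero_neighbourhood:
  fixes W N :: "'a::topological_group_add set"
  assumes "compact W" "open N" "W \<subseteq> N"
  obtains V where "open V" "0 \<in> V" "\<And>v v' w. v \<in> V \<Longrightarrow> v' \<in> V \<Longrightarrow> w \<in> W \<Longrightarrow> -v + w + v' \<in> N"
  by (rule zero_neighbourhood_uniform_on_compact[of "\<lambda>v v' w. -v + w + v'" W N])
    (use assms in \<open>auto intro!: continuous_intros\<close>)

lemma Hausdorff_space_euclidean_t2: "Hausdorff_space (euclidean :: 'a::t2_space topology)"
  unfolding Hausdorff_space_def by (metis disjnt_def open_openin separation_t2)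

lemma locally_compact_open_between:
  assumes "locally_compact_space (euclidean :: 'a::t2_space topology)" "compact (K::'a set)"
  obtains N L where "open N" "compact L" "K \<subseteq> N" "N \<subseteq> L"
  using assms locally_compact_space_compact_closed_compact[of "euclidean :: 'a topology"]
  by (metis Hausdorff_space_euclidean_t2 compactin_euclidean_iff open_openin)

lemma locally_compact_compact_neighbourhood:
  assumes "locally_compact_space (euclidean :: 'a::t2_space topology)" "open Z" "(x::'a) \<in> Z"
  obtains P W where "open P" "compact W" "x \<in> P" "P \<subseteq> W" "W \<subseteq> Z"
proof -
  have "neighbourhood_base_of (compactin euclidean) (euclidean :: 'a topology)"
    using locally_compact_space_neighbourhood_base Hausdorff_space_euclidean_t2 assms(1) by blast
  then show ?thesis
    using assms that unfolding neighbourhood_base_of by (metis compactin_euclidean_iff open_openin)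
qed

section \<open>Haar measure\<close>

lemma
  assumes "left_haar_measure M"
  shows sets_left_haar: "sets M = sets borel"
    and left_haar_compact_finite: "compact K \<Longrightarrow> emeasure M K < \<infinity>"
    and left_haar_outer_regular:
      "A \<in> sets borel \<Longrightarrow> emeasure M A = (INF U\<in>{U. open U \<and> A \<subseteq> U}. emeasure M U)"
    and left_haar_inner_regular:
      "open U \<Longrightarrow> emeasure M U = (SUP K\<in>{K. compact K \<and> K \<subseteq> U}. emeasure M K)"
    and left_haar_nonzero: "emeasure M UNIV \<noteq> 0"
    and emeasure_left_translation: "A \<in> sets borel \<Longrightarrow> emeasure M ((+) g ` A) = emeasure M A"
  using assms unfolding left_haar_measure_def radon_measure_def by auto

lemma left_haar_open_pos:
  fixes M :: "'a::{topological_group_add,t2_space} measure"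
  assumes M: "left_haar_measure M" and V: "open V" "v \<in> V"
  shows "emeasure M V \<noteq> 0"
proof
  assume V0: "emeasure M V = 0"
  have "emeasure M K = 0" if K: "compact K" for K
  proof -
    have cover: "K \<subseteq> (\<Union>k\<in>K. (+) (k + -v) ` V)"
    proof
      fix x assume "x \<in> K"
      then show "x \<in> (\<Union>k\<in>K. (+) (k + -v) ` V)"
        using V(2) by (intro UN_I[of x]) (simp_all add: minus_add add.assoc)
    qed
    obtain F where F: "finite F" "F \<subseteq> K" "K \<subseteq> (\<Union>k\<in>F. (+) (k + -v) ` V)"
      by (rule compactE_image[OF K _ cover]) (simp_all add: open_left_translation V(1))
    have sets: "(\<lambda>k. (+) (k + -v) ` V) ` F \<subseteq> sets M"
      using V(1) by (auto simp: sets_left_haar[OF M] intro!: borel_open open_left_translation)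
    have "emeasure M K \<le> emeasure M (\<Union>k\<in>F. (+) (k + -v) ` V)"
      using F sets by (intro emeasure_mono sets.finite_UN) auto
    also have "\<dots> \<le> (\<Sum>k\<in>F. emeasure M ((+) (k + -v) ` V))"
      using emeasure_subadditive_finite[OF F(1) sets] .
    also have "\<dots> = 0"
      using V0 V(1) by (simp add: emeasure_left_translation[OF M] borel_open)
    finally show ?thesis
      by simp
  qed
  then have "emeasure M UNIV = 0"
    using left_haar_inner_regular[OF M open_UNIV] by (simp flip: bot_ennreal)
  then show False
    using left_haar_nonzero[OF M] by simp
qed

lemma left_haar_open_superset:
  assumes M: "left_haar_measure M" and A: "A \<in> sets borel" "emeasure M A < \<infinity>" and e: "0 < e"
  obtains U where "open U" "A \<subseteq> U" "emeasure M U < \<infinity>" "measure M U < measure M A + e"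
proof -
  have eA: "emeasure M A = ennreal (measure M A)"
    using A(2) by (simp add: emeasure_eq_ennreal_measure)
  have "emeasure M A < ennreal (measure M A + e)"
    unfolding eA using e by (simp add: ennreal_less_iff)
  then obtain U where U: "open U" "A \<subseteq> U" "emeasure M U < ennreal (measure M A + e)"
    unfolding left_haar_outer_regular[OF M A(1)] INF_less_iff by blast
  have finite: "emeasure M U < \<infinity>"
    using order.strict_trans[OF U(3) ennreal_less_top] by (simp add: infinity_ennreal_def)
  then have "ennreal (measure M U) < ennreal (measure M A + e)"
    using U(3) by (simp add: emeasure_eq_ennreal_measure del: ennreal_plus)
  then have "measure M U < measure M A + e"
    by (simp add: ennreal_less_iff del: ennreal_plus)
  with U finite that show ?thesis
    by blast
qed

section \<open>Counting translates\<close>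

lemma sum_emeasure_Int_eq_nn_integral_card:
  assumes "finite H" "B \<in> sets M" "\<And>x. x \<in> H \<Longrightarrow> T x \<in> sets M"
  shows "(\<Sum>x\<in>H. emeasure M (B \<inter> T x)) = (\<integral>\<^sup>+y. of_nat (card {x\<in>H. y \<in> T x}) * indicator B y \<partial>M)"
proof -
  have "(\<Sum>x\<in>H. emeasure M (B \<inter> T x)) = (\<integral>\<^sup>+y. (\<Sum>x\<in>H. indicator (B \<inter> T x) y) \<partial>M)"
    using assms by (simp add: nn_integral_sum)
  also have "\<dots> = (\<integral>\<^sup>+y. of_nat (card {x\<in>H. y \<in> T x}) * indicator B y \<partial>M)"
  proof (intro nn_integral_cong)
    fix y
    have "(\<Sum>x\<in>H. indicator (B \<inter> T x) y :: ennreal) = of_nat (card {x\<in>H. y \<in> B \<and> y \<in> T x})"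
      using assms(1) by (simp add: indicator_def of_bool_def flip: sum.inter_filter)
    then show "(\<Sum>x\<in>H. indicator (B \<inter> T x) y :: ennreal) = of_nat (card {x\<in>H. y \<in> T x}) * indicator B y"
      by (simp add: indicator_def)
  qed
  finally show ?thesis .
qed

lemma card_lower_bound_emeasure:
  assumes "finite H" "B \<in> sets M" "\<And>x. x \<in> H \<Longrightarrow> T x \<in> sets M"
    and "\<And>y. y \<in> B \<Longrightarrow> c \<le> card {x\<in>H. y \<in> T x}"
  shows "of_nat c * emeasure M B \<le> (\<Sum>x\<in>H. emeasure M (B \<inter> T x))"
proof -
  have "of_nat c * emeasure M B = (\<integral>\<^sup>+y. of_nat c * indicator B y \<partial>M)"
    using assms(2) by (simp add: nn_integral_cmult_indicator)
  also have "\<dots> \<le> (\<integral>\<^sup>+y. of_nat (card {x\<in>H. y \<in> T x}) * indicator B y \<partial>M)"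
    using assms(4) by (intro nn_integral_mono) (simp add: indicator_def)
  also have "\<dots> = (\<Sum>x\<in>H. emeasure M (B \<inter> T x))"
    using sum_emeasure_Int_eq_nn_integral_card[OF assms(1-3)] ..
  finally show ?thesis .
qed

lemma card_upper_bound_emeasure:
  assumes "finite H" "B \<in> sets M" "\<And>x. x \<in> H \<Longrightarrow> T x \<in> sets M"
    and "\<And>y. y \<in> B \<Longrightarrow> card {x\<in>H. y \<in> T x} \<le> c"
  shows "(\<Sum>x\<in>H. emeasure M (B \<inter> T x)) \<le> of_nat c * emeasure M B"
proof -
  have "(\<Sum>x\<in>H. emeasure M (B \<inter> T x)) = (\<integral>\<^sup>+y. of_nat (card {x\<in>H. y \<in> T x}) * indicator B y \<partial>M)"
    using sum_emeasure_Int_eq_nn_integral_card[OF assms(1-3)] .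
  also have "\<dots> \<le> (\<integral>\<^sup>+y. of_nat c * indicator B y \<partial>M)"
    using assms(4) by (intro nn_integral_mono) (simp add: indicator_def)
  also have "\<dots> = of_nat c * emeasure M B"
    using assms(2) by (simp add: nn_integral_cmult_indicator)
  finally show ?thesis .
qed

lemma left_haar_count_translates:
  fixes M :: "'a::{topological_group_add,t2_space} measure" and t :: "'i \<Rightarrow> 'a"
  assumes M: "left_haar_measure M" and H: "finite H"
    and borel: "B \<in> sets borel" "N \<in> sets borel" "Wa \<in> sets borel" "Wb \<in> sets borel"
    and c: "1 \<le> c"
    and lower: "\<And>y. y \<in> B \<Longrightarrow> c \<le> card {x\<in>H. y \<in> (+) (t x) ` Wa}"
    and upper: "\<And>y. y \<in> N \<Longrightarrow> card {x\<in>H. y \<in> (+) (t x) ` Wb} \<le> c"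
    and meeting_le_inside:
      "card {x\<in>H. B \<inter> (+) (t x) ` Wa \<noteq> {}} \<le> card {x\<in>H. (+) (t x) ` Wb \<subseteq> N}"
  shows "emeasure M B * emeasure M Wb \<le> emeasure M N * emeasure M Wa"
proof -
  define meeting where "meeting = {x\<in>H. B \<inter> (+) (t x) ` Wa \<noteq> {}}"
  define inside where "inside = {x\<in>H. (+) (t x) ` Wb \<subseteq> N}"
  have sets: "B \<in> sets M" "N \<in> sets M" "\<And>x. (+) (t x) ` Wa \<in> sets M" "\<And>x. (+) (t x) ` Wb \<in> sets M"
    using borel by (simp_all add: sets_left_haar[OF M] borel_left_translation)
  have "of_nat c * emeasure M B \<le> (\<Sum>x\<in>H. emeasure M (B \<inter> (+) (t x) ` Wa))"
    using card_lower_bound_emeasure[OF H sets(1,3) lower] .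
  also have "\<dots> = (\<Sum>x\<in>meeting. emeasure M (B \<inter> (+) (t x) ` Wa))"
    unfolding meeting_def using H by (intro sum.mono_neutral_right) auto
  also have "\<dots> \<le> (\<Sum>x\<in>meeting. emeasure M ((+) (t x) ` Wa))"
    using sets by (intro sum_mono emeasure_mono) auto
  also have "\<dots> = of_nat (card meeting) * emeasure M Wa"
    using borel by (simp add: emeasure_left_translation[OF M])
  also have "\<dots> \<le> of_nat (card inside) * emeasure M Wa"
    using meeting_le_inside unfolding meeting_def inside_def by (intro mult_right_mono) auto
  finally have lower_bound: "of_nat c * emeasure M B \<le> of_nat (card inside) * emeasure M Wa" .
  have "of_nat (card inside) * emeasure M Wb = (\<Sum>x\<in>inside. emeasure M (N \<inter> (+) (t x) ` Wb))"
    using borel by (simp add: inside_def emeasure_left_translation[OF M] Int_absorb1)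
  also have "\<dots> \<le> (\<Sum>x\<in>H. emeasure M (N \<inter> (+) (t x) ` Wb))"
    using H by (intro sum_mono2) (auto simp: inside_def)
  also have "\<dots> \<le> of_nat c * emeasure M N"
    using card_upper_bound_emeasure[OF H sets(2,4) upper] .
  finally have upper_bound: "of_nat (card inside) * emeasure M Wb \<le> of_nat c * emeasure M N" .
  have "of_nat c * (emeasure M B * emeasure M Wb) \<le> of_nat (card inside) * emeasure M Wa * emeasure M Wb"
    using mult_right_mono[OF lower_bound, of "emeasure M Wb"] by (simp add: mult.assoc)
  also have "\<dots> \<le> of_nat c * emeasure M N * emeasure M Wa"
    using mult_right_mono[OF upper_bound, of "emeasure M Wa"] by (simp add: ac_simps)
  finally show ?thesis
    using c by (simp add: mult.assoc ennreal_mult_le_mult_iff)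
qed

section \<open>Finite quasigroup approximations\<close>

lemma finite_quasigroupD:
  assumes "finite_quasigroup H op" "a \<in> H" "b \<in> H"
  shows "op a b \<in> H" "\<exists>!x. x \<in> H \<and> op a x = b" "\<exists>!x. x \<in> H \<and> op x a = b"
  using assms unfolding finite_quasigroup_def by blast+

lemma finite_quasigroup_inj_on_left:
  assumes "finite_quasigroup H op" "a \<in> H"
  shows "inj_on (op a) H"
proof (rule inj_onI)
  fix x y assume "x \<in> H" "y \<in> H" "op a x = op a y"
  moreover have "\<exists>!z. z \<in> H \<and> op a z = op a x"
    using finite_quasigroupD[OF assms finite_quasigroupD(1)[OF assms \<open>x \<in> H\<close>]] by blast
  ultimately show "x = y"
    by (metis (mono_tags, lifting))
qed

lemma finite_quasigroup_inj_on_right: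
  assumes "finite_quasigroup H op" "b \<in> H"
  shows "inj_on (\<lambda>x. op x b) H"
proof (rule inj_onI)
  fix x y assume "x \<in> H" "y \<in> H" "op x b = op y b"
  moreover have "\<exists>!z. z \<in> H \<and> op z b = op x b"
    using finite_quasigroupD[OF assms finite_quasigroupD(1)[OF assms(1) \<open>x \<in> H\<close> assms(2)]] by blast
  ultimately show "x = y"
    by (metis (mono_tags, lifting))
qed

text \<open>The data of the counting argument for a compact set \<open>K\<close> and a group element \<open>g\<close>:
  \<open>N \<subseteq> L\<close> is an open neighbourhood of \<open>K\<close> inside a compact set, \<open>Wb \<subseteq> Wa\<close> are the small
  neighbourhoods of the unit whose translates are counted, \<open>U\<close> is the precision of the
  approximation, and every element occurring in the estimates is a sum of at most five
  elements of \<open>S\<close>, so the quasigroup only has to approximate the group on \<open>S + S + S + S + S\<close>.\<close>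

locale neighbourhood_configuration =
  fixes g :: "'a::group_add" and K L N Z Wa Wb U V S :: "'a set"
  assumes K_plus_Z: "\<And>k z1 z2 z3 z4. k \<in> K \<Longrightarrow> z1 \<in> Z \<Longrightarrow> z2 \<in> Z \<Longrightarrow> z3 \<in> Z \<Longrightarrow> z4 \<in> Z \<Longrightarrow>
      k + z1 + z2 + z3 + z4 \<in> N"
    and N_subset: "N \<subseteq> L"
    and Wb_subset: "Wb \<subseteq> Wa" and Wa_subset: "Wa \<subseteq> Z"
    and conj_g_Wa: "\<And>w. w \<in> Wa \<Longrightarrow> g + -w + -g \<in> Z"
    and V_Wb_V: "\<And>v v' w. v \<in> V \<Longrightarrow> v' \<in> V \<Longrightarrow> w \<in> Wb \<Longrightarrow> -v + w + v' \<in> Wa"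
    and U_subset: "U \<subseteq> V" "U \<subseteq> Wa"
    and uminus_U: "\<And>u. u \<in> U \<Longrightarrow> -u \<in> Z"
    and conj_L_U: "\<And>y u. y \<in> L \<Longrightarrow> u \<in> U \<Longrightarrow> -y + u + y \<in> V"
    and S: "0 \<in> S" "g \<in> S" "K \<subseteq> S" "L \<subseteq> S" "(\<lambda>k. k + g) ` K \<subseteq> S" "Z \<subseteq> S"
      "\<And>s. s \<in> S \<Longrightarrow> -s \<in> S"

locale quasigroup_configuration = neighbourhood_configuration g K L N Z Wa Wb U V S
  for g :: "'a::group_add" and K L N Z Wa Wb U V S :: "'a set" +
  fixes H :: "nat set" and op :: "nat \<Rightarrow> nat \<Rightarrow> nat" and j :: "nat \<Rightarrow> 'a"
  assumes quasigroup: "finite_quasigroup H op"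
    and approximation: "CU_approximation (S + S + S + S + S) U H op j"
begin

abbreviation C :: "'a set" where "C \<equiv> S + S + S + S + S"

abbreviation Kg :: "'a set" where "Kg \<equiv> (\<lambda>k. k + g) ` K"

lemma finite_H: "finite H"
  using quasigroup unfolding finite_quasigroup_def by blast

lemma op_closed: "a \<in> H \<Longrightarrow> b \<in> H \<Longrightarrow> op a b \<in> H"
  using finite_quasigroupD(1)[OF quasigroup] .

lemma sum_in_C:
  "a1 \<in> S \<Longrightarrow> a2 \<in> S \<Longrightarrow> a3 \<in> S \<Longrightarrow> a4 \<in> S \<Longrightarrow> a5 \<in> S \<Longrightarrow> a1 + a2 + a3 + a4 + a5 \<in> C"
  by (intro set_plus_intro)

lemma approximation_covers:
  assumes "y \<in> C"
  obtains h u where "h \<in> H" "u \<in> U" "y = j h + u"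
  using assms approximation unfolding CU_approximation_def by blast

lemma approximation_add:
  assumes "x \<in> H" "y \<in> H" "j x \<in> C" "j y \<in> C"
    "j x + j y \<in> C"
  obtains u where "u \<in> U" "j (op x y) = j x + j y + u"
  using assms approximation unfolding CU_approximation_def by blast

lemma left_multiplication_moves_translates:
  assumes y: "y \<in> N" "y' \<in> Kg"
    and a: "a \<in> H" "u1 \<in> U" "j a = y' + -y + -u1"
    and x: "x \<in> H" "-j x + y \<in> Wb"
  shows "-j (op a x) + y' \<in> Wa"
proof -
  define w where "w = -j x + y"
  have w: "w \<in> Wb" "-w \<in> S"
    using x Wb_subset Wa_subset S(6,7) by (auto simp: w_def)
  have jx: "j x = y + -w"
    by (simp add: w_def minus_add add.assoc diff_conv_add_uminus del: add_uminus_conv_diff)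
  have in_S: "y \<in> S" "-y \<in> S" "y' \<in> S" "-u1 \<in> S"
    using y N_subset S uminus_U a(2) by auto
  have "j a \<in> C" "j x \<in> C" "j a + j x \<in> C"
    using sum_in_C[of y' "-y" "-u1" 0 0] sum_in_C[of y "-w" 0 0 0] sum_in_C[of y' "-y" "-u1" y "-w"]
      in_S w(2) S(1) by (simp_all add: a(3) jx add.assoc diff_conv_add_uminus del: add_uminus_conv_diff)
  then obtain u where u: "u \<in> U" "j (op a x) = j a + j x + u"
    using approximation_add a(1) x(1) by blast
  have "-j (op a x) + y' = -u + w + (-y + u1 + y)"
    by (simp add: u(2) a(3) jx minus_add add.assoc diff_conv_add_uminus del: add_uminus_conv_diff)
  also have "\<dots> \<in> Wa"
    using V_Wb_V[OF subsetD[OF U_subset(1) u(1)] conj_L_U[OF subsetD[OF N_subset y(1)] a(2)] w(1)] .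
  finally show ?thesis .
qed

lemma card_translates_left_shift:
  assumes y: "y \<in> N" "y' \<in> Kg"
  shows "card {x\<in>H. y \<in> (+) (j x) ` Wb} \<le> card {x\<in>H. y' \<in> (+) (j x) ` Wa}"
proof -
  have "y' + -y + 0 + 0 + 0 \<in> C"
    using y N_subset S by (intro sum_in_C) auto
  then obtain a u1 where a: "a \<in> H" "u1 \<in> U" "y' + -y = j a + u1"
    using approximation_covers by auto
  then have ja: "j a = y' + -y + -u1"
    by (simp add: add.assoc)
  show ?thesis
  proof (rule card_inj_on_le)
    show "inj_on (op a) {x\<in>H. y \<in> (+) (j x) ` Wb}"
      using finite_quasigroup_inj_on_left[OF quasigroup a(1)] by (rule inj_on_subset) auto
    show "op a ` {x\<in>H. y \<in> (+) (j x) ` Wb} \<subseteq> {x\<in>H. y' \<in> (+) (j x) ` Wa}"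
      using left_multiplication_moves_translates[OF y a(1,2) ja] op_closed a(1) by auto
  qed (simp add: finite_H)
qed

lemma card_translates_pos:
  assumes "y \<in> Kg"
  shows "1 \<le> card {x\<in>H. y \<in> (+) (j x) ` Wa}"
proof -
  have "y + 0 + 0 + 0 + 0 \<in> C"
    using assms S by (intro sum_in_C) auto
  then obtain h u where "h \<in> H" "u \<in> U" "y = j h + u"
    using approximation_covers by auto
  then have "h \<in> {x\<in>H. y \<in> (+) (j x) ` Wa}"
    using U_subset(2) by (auto simp: add.assoc)
  then show ?thesis
    using finite_H by (simp add: Suc_le_eq card_gt_0_iff) blast
qed

lemma right_multiplication_moves_translates:
  assumes b: "b \<in> H" "u1 \<in> U" "j b = -g + -u1"
    and x: "x \<in> H" "p \<in> Kg" "-j x + p \<in> Wa" and w: "w \<in> Wb"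
  shows "j (op x b) + w \<in> N"
proof -
  obtain k where k: "k \<in> K" "p = k + g"
    using x(2) by blast
  define wa where "wa = -j x + p"
  have wa: "wa \<in> Wa" "-wa \<in> S"
    using x(3) Wa_subset S(6,7) by (auto simp: wa_def)
  have jx: "j x = k + g + -wa"
    by (simp add: wa_def k(2) minus_add add.assoc diff_conv_add_uminus del: add_uminus_conv_diff)
  have in_S: "k \<in> S" "-g \<in> S" "-u1 \<in> S"
    using k(1) S uminus_U b(2) by auto
  have "j x \<in> C" "j b \<in> C" "j x + j b \<in> C"
    using sum_in_C[of k g "-wa" 0 0] sum_in_C[of "-g" "-u1" 0 0 0] sum_in_C[of k g "-wa" "-g" "-u1"]
      in_S wa(2) S(1,2) by (simp_all add: b(3) jx add.assoc diff_conv_add_uminus del: add_uminus_conv_diff)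
  then obtain u where u: "u \<in> U" "j (op x b) = j x + j b + u"
    using approximation_add x(1) b(1) by blast
  have "j (op x b) + w = k + (g + -wa + -g) + -u1 + u + w"
    by (simp add: u(2) b(3) jx add.assoc diff_conv_add_uminus del: add_uminus_conv_diff)
  also have "\<dots> \<in> N"
    using K_plus_Z[OF k(1) conj_g_Wa[OF wa(1)] uminus_U[OF b(2)]] U_subset(2) Wa_subset Wb_subset u(1) w
    by blast
  finally show ?thesis .
qed

lemma card_meeting_le_inside:
  "card {x\<in>H. Kg \<inter> (+) (j x) ` Wa \<noteq> {}} \<le> card {x\<in>H. (+) (j x) ` Wb \<subseteq> N}"
proof -
  have "-g + 0 + 0 + 0 + 0 \<in> C"
    using S by (intro sum_in_C) auto
  then obtain b u1 where b: "b \<in> H" "u1 \<in> U" "-g = j b + u1"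
    using approximation_covers by auto
  then have jb: "j b = -g + -u1"
    by (simp add: add.assoc)
  show ?thesis
  proof (rule card_inj_on_le)
    show "inj_on (\<lambda>x. op x b) {x\<in>H. Kg \<inter> (+) (j x) ` Wa \<noteq> {}}"
      using finite_quasigroup_inj_on_right[OF quasigroup b(1)] by (rule inj_on_subset) auto
    show "(\<lambda>x. op x b) ` {x\<in>H. Kg \<inter> (+) (j x) ` Wa \<noteq> {}} \<subseteq> {x\<in>H. (+) (j x) ` Wb \<subseteq> N}"
      using right_multiplication_moves_translates[OF b(1,2) jb] op_closed b(1) by fastforce
  qed (simp add: finite_H)
qed

lemma card_translates_bounds:
  assumes "K \<noteq> {}"
  obtains c where "1 \<le> c" "\<And>y. y \<in> Kg \<Longrightarrow> c \<le> card {x\<in>H. y \<in> (+) (j x) ` Wa}"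
    "\<And>y. y \<in> N \<Longrightarrow> card {x\<in>H. y \<in> (+) (j x) ` Wb} \<le> c"
proof -
  obtain k where "k \<in> K"
    using assms by blast
  then obtain y0 where y0: "y0 \<in> Kg"
    "\<And>y. y \<in> Kg \<Longrightarrow> card {x\<in>H. y0 \<in> (+) (j x) ` Wa} \<le> card {x\<in>H. y \<in> (+) (j x) ` Wa}"
    using ex_has_least_nat[of "\<lambda>y. y \<in> Kg" "k + g" "\<lambda>y. card {x\<in>H. y \<in> (+) (j x) ` Wa}"]
    by blast
  show ?thesis
  proof (rule that)
    show "1 \<le> card {x\<in>H. y0 \<in> (+) (j x) ` Wa}"
      using card_translates_pos[OF y0(1)] .
  qed (use y0(2) card_translates_left_shift[OF _ y0(1)] in auto)
qed

end

section \<open>Right translations preserve Haar measure\<close>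

lemma left_haar_open_approx_compact:
  fixes M :: "'a::{topological_group_add,t2_space} measure"
  assumes lc: "locally_compact_space (euclidean :: 'a topology)"
    and M: "left_haar_measure M" and K: "compact K" and e: "0 < e"
  obtains N L where "open N" "compact L" "K \<subseteq> N" "N \<subseteq> L" "emeasure M N < \<infinity>"
    "measure M N \<le> measure M K + e"
proof -
  obtain P L where PL: "open P" "compact L" "K \<subseteq> P" "P \<subseteq> L"
    using locally_compact_open_between[OF lc K] by blast
  obtain O' where O': "open O'" "K \<subseteq> O'" "emeasure M O' < \<infinity>" "measure M O' < measure M K + e"
    using left_haar_open_superset[OF M borel_compact[OF K] left_haar_compact_finite[OF M K] e] by blast
  have "measure M (O' \<inter> P) \<le> measure M O'"
    using O' PL by (intro measure_mono_fmeasurable) (auto simp: sets_left_haar[OF M] fmeasurable_def)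
  moreover have "emeasure M (O' \<inter> P) < \<infinity>"
    using O' PL by (auto simp: sets_left_haar[OF M] intro: le_less_trans[OF emeasure_mono])
  ultimately show ?thesis
    using that[of "O' \<inter> P" L] O' PL by auto
qed

lemma left_haar_compact_open_pair:
  fixes M :: "'a::{topological_group_add,t2_space} measure"
  assumes lc: "locally_compact_space (euclidean :: 'a topology)"
    and M: "left_haar_measure M" and Z: "open Z" "0 \<in> Z" and e: "0 < e"
  obtains Wa Wb where "open Wa" "compact Wb" "0 \<in> Wb" "Wb \<subseteq> Wa" "Wa \<subseteq> Z"
    "0 < measure M Wb" "emeasure M Wa < \<infinity>" "measure M Wa \<le> (1 + e) * measure M Wb"
proof -
  obtain P Wb where Wb: "open P" "compact Wb" "0 \<in> P" "P \<subseteq> Wb" "Wb \<subseteq> Z"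
    using locally_compact_compact_neighbourhood[OF lc Z] by blast
  have Wb_finite: "emeasure M Wb < \<infinity>"
    using left_haar_compact_finite[OF M Wb(2)] .
  have "0 < emeasure M P"
    using left_haar_open_pos[OF M Wb(1,3)] by (simp add: zero_less_iff_neq_zero)
  also have "emeasure M P \<le> emeasure M Wb"
    using Wb by (intro emeasure_mono) (auto simp: sets_left_haar[OF M] borel_compact)
  finally have Wb_pos: "0 < measure M Wb"
    using Wb_finite by (simp add: measure_def enn2real_positive_iff infinity_ennreal_def)
  have "0 < e * measure M Wb"
    using e Wb_pos by simp
  then obtain Wa where Wa: "open Wa" "Wb \<subseteq> Wa" "emeasure M Wa < \<infinity>"
    "measure M Wa < measure M Wb + e * measure M Wb"
    using left_haar_open_superset[OF M borel_compact[OF Wb(2)] Wb_finite] by blast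
  have "measure M (Wa \<inter> Z) \<le> measure M Wa"
    using Wa Z by (intro measure_mono_fmeasurable) (auto simp: sets_left_haar[OF M] fmeasurable_def)
  moreover have "emeasure M (Wa \<inter> Z) < \<infinity>"
    using Wa Z by (auto simp: sets_left_haar[OF M] intro: le_less_trans[OF emeasure_mono])
  ultimately show ?thesis
    using that[of "Wa \<inter> Z" Wb] Wa Wb Wb_pos Z by (auto simp: algebra_simps)
qed

lemma approximable_by_finite_quasigroupsD:
  assumes "approximable_by_finite_quasigroups TYPE('a::topological_group_add)"
    and "compact C" "open U" "(0::'a) \<in> U"
  obtains H op j where "finite_quasigroup H op" "CU_approximation C U H op j"
proof -
  have "compact C \<and> (\<exists>V. open V \<and> 0 \<in> V \<and> V \<subseteq> U)"
    using assms(2-4) by blast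
  then show ?thesis
    using assms(1) that unfolding approximable_by_finite_quasigroups_def by blast
qed

lemma locally_compact_add_zero_neighbourhood:
  fixes K N :: "'a::{topological_group_add,t2_space} set"
  assumes lc: "locally_compact_space (euclidean :: 'a topology)"
    and "compact K" "open N" "K \<subseteq> N"
  obtains Z W where "open Z" "0 \<in> Z" "compact W" "Z \<subseteq> W"
    "\<And>k z1 z2 z3 z4. k \<in> K \<Longrightarrow> z1 \<in> Z \<Longrightarrow> z2 \<in> Z \<Longrightarrow> z3 \<in> Z \<Longrightarrow> z4 \<in> Z \<Longrightarrow>
       k + z1 + z2 + z3 + z4 \<in> N"
proof -
  obtain Z where Z: "open Z" "0 \<in> Z"
    "\<And>k z1 z2 z3 z4. k \<in> K \<Longrightarrow> z1 \<in> Z \<Longrightarrow> z2 \<in> Z \<Longrightarrow> z3 \<in> Z \<Longrightarrow> z4 \<in> Z \<Longrightarrow>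
       k + z1 + z2 + z3 + z4 \<in> N"
    using compact_add_zero_neighbourhood[OF assms(2-4)] by blast
  obtain P W :: "'a set" where W: "open P" "compact W" "0 \<in> P" "P \<subseteq> W"
    by (rule locally_compact_compact_neighbourhood[OF lc open_UNIV UNIV_I]) blast
  show ?thesis
  proof (rule that[of "Z \<inter> P" W])
    show "k + z1 + z2 + z3 + z4 \<in> N"
      if "k \<in> K" "z1 \<in> Z \<inter> P" "z2 \<in> Z \<inter> P" "z3 \<in> Z \<inter> P" "z4 \<in> Z \<inter> P" for k z1 z2 z3 z4
      using Z(3) that by blast
  qed (use Z(1,2) W in auto)
qed

lemma compact_symmetric_superset:
  fixes T :: "'a::topological_group_add set"
  assumes "compact T"
  obtains S where "compact S" "T \<subseteq> S" "\<And>s. s \<in> S \<Longrightarrow> -s \<in> S"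
proof (rule that[of "T \<union> uminus ` T"])
  show "compact (T \<union> uminus ` T)"
    using assms by (intro compact_Un compact_uminus_image)
qed (auto simp: image_iff)

lemma neighbourhood_configuration_exists:
  fixes M :: "'a::{topological_group_add,t2_space} measure" and g :: 'a and K :: "'a set"
  assumes lc: "locally_compact_space (euclidean :: 'a topology)"
    and M: "left_haar_measure M" and e: "0 < e"
    and K: "compact K" and N: "open N" "K \<subseteq> N" and L: "compact L" "N \<subseteq> L"
  obtains Z Wa Wb U V S where "neighbourhood_configuration g K L N Z Wa Wb U V S"
    "open U" "0 \<in> U" "compact S" "open Wa" "compact Wb" "0 < measure M Wb" "emeasure M Wa < \<infinity>"
    "measure M Wa \<le> (1 + e) * measure M Wb"
proof -
  obtain Z W0 where Z: "open Z" "0 \<in> Z" "compact W0" "Z \<subseteq> W0"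
    "\<And>k z1 z2 z3 z4. k \<in> K \<Longrightarrow> z1 \<in> Z \<Longrightarrow> z2 \<in> Z \<Longrightarrow> z3 \<in> Z \<Longrightarrow> z4 \<in> Z \<Longrightarrow>
       k + z1 + z2 + z3 + z4 \<in> N"
    using locally_compact_add_zero_neighbourhood[OF lc K N] by blast
  define Z1 where "Z1 = Z \<inter> (\<lambda>w. g + -w + -g) -` Z"
  have "continuous_on UNIV (\<lambda>w. g + -w + -g)"
    by (intro continuous_intros)
  then have Z1: "open Z1" "0 \<in> Z1"
    using Z(1,2) open_Int open_vimage unfolding Z1_def by auto
  obtain Wa Wb where W: "open Wa" "compact Wb" "0 \<in> Wb" "Wb \<subseteq> Wa" "Wa \<subseteq> Z1"
    "0 < measure M Wb" "emeasure M Wa < \<infinity>" "measure M Wa \<le> (1 + e) * measure M Wb"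
    using left_haar_compact_open_pair[OF lc M Z1 e] by blast
  obtain V where V: "open V" "0 \<in> V" "\<And>v v' w. v \<in> V \<Longrightarrow> v' \<in> V \<Longrightarrow> w \<in> Wb \<Longrightarrow> -v + w + v' \<in> Wa"
    using compact_two_sided_zero_neighbourhood[OF W(2,1,4)] by blast
  obtain U0 where U0: "open U0" "0 \<in> U0" "\<And>y u. y \<in> L \<Longrightarrow> u \<in> U0 \<Longrightarrow> -y + u + y \<in> V"
    using compact_conjugates_zero_neighbourhood[OF L(1) V(1,2)] by blast
  define U where "U = U0 \<inter> V \<inter> Wa \<inter> uminus -` Z"
  have U: "open U" "0 \<in> U"
    using U0(1,2) V(1,2) W(1,3,4) Z1 Z(1,2) open_vimage[OF Z(1) continuous_on_minus[OF continuous_on_id]]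
    by (auto simp: U_def Z1_def)
  have "compact ({0, g} \<union> K \<union> L \<union> (\<lambda>k. k + g) ` K \<union> W0)"
    using K L Z(3) by (intro compact_Un compact_right_translation) auto
  then obtain S where S: "compact S" "{0, g} \<union> K \<union> L \<union> (\<lambda>k. k + g) ` K \<union> W0 \<subseteq> S"
    "\<And>s. s \<in> S \<Longrightarrow> -s \<in> S"
    using compact_symmetric_superset by blast
  have "neighbourhood_configuration g K L N Z Wa Wb U V S"
  proof
    show "k + z1 + z2 + z3 + z4 \<in> N"
      if "k \<in> K" "z1 \<in> Z" "z2 \<in> Z" "z3 \<in> Z" "z4 \<in> Z" for k z1 z2 z3 z4
      using Z(5) that .
  qed (use Z(4) L(2) W(4,5) V(3) U0(3) S(2,3) in \<open>auto simp: U_def Z1_def\<close>)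
  with U S(1) W that show ?thesis
    by blast
qed

lemma left_haar_right_translate_compact_le:
  fixes M :: "'a::{topological_group_add,t2_space} measure"
  assumes lc: "locally_compact_space (euclidean :: 'a topology)"
    and ap: "approximable_by_finite_quasigroups TYPE('a)"
    and M: "left_haar_measure M" and K: "compact K" and e: "0 < e"
  shows "measure M ((\<lambda>x. x + g) ` K) \<le> (1 + e) * (measure M K + e)"
proof (cases "K = {}")
  case False
  obtain N L where N: "open N" "compact L" "K \<subseteq> N" "N \<subseteq> L" "emeasure M N < \<infinity>"
    "measure M N \<le> measure M K + e"
    using left_haar_open_approx_compact[OF lc M K e] by blast
  obtain Z Wa Wb U V S where conf: "neighbourhood_configuration g K L N Z Wa Wb U V S"
    and U: "open U" "0 \<in> U" and S: "compact S"
    and W: "open Wa" "compact Wb" "0 < measure M Wb" "emeasure M Wa < \<infinity>"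
      "measure M Wa \<le> (1 + e) * measure M Wb"
    by (rule neighbourhood_configuration_exists[OF lc M e K N(1,3) N(2,4)]) blast
  have "compact (S + S + S + S + S)"
    using S by (intro compact_set_plus)
  then obtain H op j where "finite_quasigroup H op" "CU_approximation (S + S + S + S + S) U H op j"
    using approximable_by_finite_quasigroupsD[OF ap _ U] by blast
  with conf interpret quasigroup_configuration g K L N Z Wa Wb U V S H op j
    by (simp add: quasigroup_configuration_def quasigroup_configuration_axioms_def)
  obtain c where c: "1 \<le> c" "\<And>y. y \<in> Kg \<Longrightarrow> c \<le> card {x\<in>H. y \<in> (+) (j x) ` Wa}"
    "\<And>y. y \<in> N \<Longrightarrow> card {x\<in>H. y \<in> (+) (j x) ` Wb} \<le> c"
    using card_translates_bounds[OF False] by blast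
  have "emeasure M Kg * emeasure M Wb \<le> emeasure M N * emeasure M Wa"
    using K N(1) W(1,2)
    by (intro left_haar_count_translates[OF M finite_H _ _ _ _ c card_meeting_le_inside])
      (auto intro: borel_compact borel_open compact_right_translation)
  then have "measure M Kg * measure M Wb \<le> measure M N * measure M Wa"
    using enn2real_mono N(5) W(4)
    by (fastforce simp: measure_def enn2real_mult ennreal_mult_less_top infinity_ennreal_def)
  also have "\<dots> \<le> (measure M K + e) * ((1 + e) * measure M Wb)"
    using N(6) W(5) e by (intro mult_mono) auto
  finally show ?thesis
    using W(3) by (simp add: ac_simps)
qed (use e in simp)

lemma left_haar_right_translate_compact:
  fixes M :: "'a::{topological_group_add,t2_space} measure"
  assumes lc: "locally_compact_space (euclidean :: 'a topology)"
    and ap: "approximable_by_finite_quasigroups TYPE('a)"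
    and M: "left_haar_measure M" and K: "compact K"
  shows "emeasure M ((\<lambda>x. x + g) ` K) \<le> emeasure M K"
proof -
  have "measure M ((\<lambda>x. x + g) ` K) \<le> measure M K"
  proof (rule tendsto_lowerbound)
    have "((\<lambda>e. (1 + e) * (measure M K + e)) \<longlongrightarrow> (1 + 0) * (measure M K + 0)) (at_right 0)"
      by (intro tendsto_intros)
    then show "((\<lambda>e. (1 + e) * (measure M K + e)) \<longlongrightarrow> measure M K) (at_right 0)"
      by simp
    show "\<forall>\<^sub>F e in at_right 0. measure M ((\<lambda>x. x + g) ` K) \<le> (1 + e) * (measure M K + e)"
      using left_haar_right_translate_compact_le[OF lc ap M K] by (intro eventually_at_rightI[of 0 1]) auto
  qed simp
  moreover have "emeasure M ((\<lambda>x. x + g) ` K) < \<infinity>" "emeasure M K < \<infinity>"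
    using left_haar_compact_finite[OF M] compact_right_translation K by blast+
  ultimately show ?thesis
    by (simp add: emeasure_eq_ennreal_measure infinity_ennreal_def)
qed

lemma left_haar_right_translate_open:
  fixes M :: "'a::{topological_group_add,t2_space} measure"
  assumes lc: "locally_compact_space (euclidean :: 'a topology)"
    and ap: "approximable_by_finite_quasigroups TYPE('a)"
    and M: "left_haar_measure M" and U: "open U"
  shows "emeasure M ((\<lambda>x. x + g) ` U) \<le> emeasure M U"
proof -
  have "emeasure M ((\<lambda>x. x + g) ` U) = (SUP K\<in>{K. compact K \<and> K \<subseteq> (\<lambda>x. x + g) ` U}. emeasure M K)"
    using left_haar_inner_regular[OF M open_right_translation[OF U]] .
  also have "\<dots> \<le> emeasure M U"
  proof (rule SUP_least)
    fix K assume K: "K \<in> {K. compact K \<and> K \<subseteq> (\<lambda>x. x + g) ` U}"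
    define K' where "K' = (\<lambda>x. x + -g) ` K"
    have K': "compact K'" "K' \<subseteq> U" "K = (\<lambda>x. x + g) ` K'"
      using K compact_right_translation[of K "-g"] by (auto simp: K'_def image_image add.assoc)
    have "emeasure M K \<le> emeasure M K'"
      unfolding K'(3) using left_haar_right_translate_compact[OF lc ap M K'(1)] .
    also have "\<dots> \<le> emeasure M U"
      using K'(2) U by (intro emeasure_mono) (simp_all add: sets_left_haar[OF M])
    finally show "emeasure M K \<le> emeasure M U" .
  qed
  finally show ?thesis .
qed

lemma left_haar_right_translate_borel:
  fixes M :: "'a::{topological_group_add,t2_space} measure"
  assumes lc: "locally_compact_space (euclidean :: 'a topology)"
    and ap: "approximable_by_finite_quasigroups TYPE('a)"
    and M: "left_haar_measure M" and A: "A \<in> sets borel"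
  shows "emeasure M ((\<lambda>x. x + g) ` A) \<le> emeasure M A"
proof -
  have "emeasure M ((\<lambda>x. x + g) ` A) = (INF V\<in>{V. open V \<and> (\<lambda>x. x + g) ` A \<subseteq> V}. emeasure M V)"
    using left_haar_outer_regular[OF M borel_right_translation[OF A]] .
  also have "\<dots> \<le> (INF U\<in>{U. open U \<and> A \<subseteq> U}. emeasure M U)"
  proof (rule INF_mono)
    fix U assume "U \<in> {U. open U \<and> A \<subseteq> U}"
    then show "\<exists>V\<in>{V. open V \<and> (\<lambda>x. x + g) ` A \<subseteq> V}. emeasure M V \<le> emeasure M U"
      using left_haar_right_translate_open[OF lc ap M] open_right_translation by blast
  qed
  also have "\<dots> = emeasure M A"
    using left_haar_outer_regular[OF M A] ..
  finally show ?thesis .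
qed

lemma left_haar_right_invariant:
  fixes M :: "'a::{topological_group_add,t2_space} measure"
  assumes lc: "locally_compact_space (euclidean :: 'a topology)"
    and ap: "approximable_by_finite_quasigroups TYPE('a)"
    and M: "left_haar_measure M" and A: "A \<in> sets borel"
  shows "emeasure M ((\<lambda>x. x + g) ` A) = emeasure M A"
proof (rule antisym)
  show "emeasure M ((\<lambda>x. x + g) ` A) \<le> emeasure M A"
    by (rule left_haar_right_translate_borel[OF lc ap M A])
  have "emeasure M A = emeasure M ((\<lambda>x. x + -g) ` (\<lambda>x. x + g) ` A)"
    by (simp add: image_image add.assoc)
  also have "\<dots> \<le> emeasure M ((\<lambda>x. x + g) ` A)"
    by (rule left_haar_right_translate_borel[OF lc ap M borel_right_translation[OF A]])
  finally show "emeasure M A \<le> emeasure M ((\<lambda>x. x + g) ` A)" .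
qed

lemma left_haar_imp_right_haar:
  fixes M :: "'a::{topological_group_add,t2_space} measure"
  assumes "locally_compact_space (euclidean :: 'a topology)"
    and "approximable_by_finite_quasigroups TYPE('a)" and "left_haar_measure M"
  shows "right_haar_measure M"
  using assms(3) left_haar_right_invariant[OF assms]
  unfolding left_haar_measure_def right_haar_measure_def by blast

section \<open>Reflection\<close>

lemma
  fixes A :: "'a::topological_group_add set"
  shows open_uminus_image_iff: "open (uminus ` A) \<longleftrightarrow> open A"
    and compact_uminus_image_iff: "compact (uminus ` A) \<longleftrightarrow> compact A"
  using open_uminus_image[of "uminus ` A"] compact_uminus_image[of "uminus ` A"]
  by (auto simp: image_image open_uminus_image compact_uminus_image)

lemma Collect_eq_image_uminus: "{X. P X} = image uminus ` {X :: 'a::group_add set. P (uminus ` X)}"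
  by (auto simp: image_image image_iff intro!: exI[where x = "uminus ` X" for X])

lemma
  fixes A :: "'a::topological_group_add set"
  shows open_supersets_uminus_image: "{V. open V \<and> uminus ` A \<subseteq> V} = image uminus ` {V. open V \<and> A \<subseteq> V}"
    and compact_subsets_uminus_image: "{K. compact K \<and> K \<subseteq> uminus ` A} = image uminus ` {K. compact K \<and> K \<subseteq> A}"
  by (subst Collect_eq_image_uminus;
      simp add: open_uminus_image_iff compact_uminus_image_iff inj_image_subset_iff)+

lemma
  assumes "radon_measure M"
  shows sets_radon: "sets M = sets borel"
    and radon_compact_finite: "compact K \<Longrightarrow> emeasure M K < \<infinity>"
    and radon_outer_regular:
      "A \<in> sets borel \<Longrightarrow> emeasure M A = (INF U\<in>{U. open U \<and> A \<subseteq> U}. emeasure M U)"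
    and radon_inner_regular:
      "open U \<Longrightarrow> emeasure M U = (SUP K\<in>{K. compact K \<and> K \<subseteq> U}. emeasure M K)"
  using assms unfolding radon_measure_def by auto

lemma measurable_uminus_borel:
  fixes N :: "'a::topological_group_add measure"
  assumes "sets N = sets borel"
  shows "uminus \<in> measurable N (borel :: 'a measure)"
  unfolding measurable_cong_sets[OF assms refl]
  by (rule borel_measurable_continuous_onI) (intro continuous_intros)

lemma emeasure_distr_uminus:
  fixes N :: "'a::topological_group_add measure"
  assumes N: "sets N = sets borel" and A: "A \<in> sets borel"
  shows "emeasure (distr N borel uminus) A = emeasure N (uminus ` A)"
  using measurable_uminus_borel[OF N] A sets_eq_imp_space_eq[OF N]
  by (simp add: emeasure_distr uminus_image_eq_vimage)

lemma radon_measure_distr_uminus: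
  fixes N :: "'a::{topological_group_add,t2_space} measure"
  assumes N: "radon_measure N"
  shows "radon_measure (distr N borel uminus)"
proof -
  note reflect = emeasure_distr_uminus[OF sets_radon[OF N]]
  show ?thesis
    unfolding radon_measure_def
  proof (intro conjI allI impI ballI)
    fix K :: "'a set" assume K: "compact K"
    then show "emeasure (distr N borel uminus) K < \<infinity>"
      using radon_compact_finite[OF N compact_uminus_image[OF K]] by (simp add: reflect borel_compact)
  next
    fix A :: "'a set" assume A: "A \<in> sets borel"
    have "emeasure N (uminus ` A) = (INF V\<in>{V. open V \<and> A \<subseteq> V}. emeasure N (uminus ` V))"
      by (simp add: radon_outer_regular[OF N borel_uminus_image[OF A]] open_supersets_uminus_image
          image_image)
    then show "emeasure (distr N borel uminus) A =
        (INF V\<in>{V. open V \<and> A \<subseteq> V}. emeasure (distr N borel uminus) V)"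
      using A by (simp add: reflect borel_open)
  next
    fix U :: "'a set" assume U: "open U"
    have "emeasure N (uminus ` U) = (SUP K\<in>{K. compact K \<and> K \<subseteq> U}. emeasure N (uminus ` K))"
      by (simp add: radon_inner_regular[OF N open_uminus_image[OF U]] compact_subsets_uminus_image
          image_image)
    then show "emeasure (distr N borel uminus) U =
        (SUP K\<in>{K. compact K \<and> K \<subseteq> U}. emeasure (distr N borel uminus) K)"
      using U by (simp add: reflect borel_open borel_compact)
  qed simp
qed

lemma right_haar_imp_left_haar_distr_uminus:
  fixes N :: "'a::{topological_group_add,t2_space} measure"
  assumes N: "right_haar_measure N"
  shows "left_haar_measure (distr N borel uminus)"
  unfolding left_haar_measure_def
proof (intro conjI allI ballI)
  have radon: "radon_measure N" and nonzero: "emeasure N UNIV \<noteq> 0"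
    and invariant: "\<And>g A. A \<in> sets borel \<Longrightarrow> emeasure N ((\<lambda>x. x + g) ` A) = emeasure N A"
    using N unfolding right_haar_measure_def by auto
  note reflect = emeasure_distr_uminus[OF sets_radon[OF radon]]
  show "radon_measure (distr N borel uminus)"
    using radon_measure_distr_uminus[OF radon] .
  show "emeasure (distr N borel uminus) UNIV \<noteq> 0"
    using nonzero by (simp add: reflect uminus_image_eq_vimage)
  fix g and A :: "'a set" assume A: "A \<in> sets borel"
  have "emeasure N (uminus ` (+) g ` A) = emeasure N ((\<lambda>x. x + -g) ` uminus ` A)"
    by (simp add: image_image minus_add)
  also have "\<dots> = emeasure N (uminus ` A)"
    using invariant[OF borel_uminus_image[OF A]] .
  finally show "emeasure (distr N borel uminus) ((+) g ` A) = emeasure (distr N borel uminus) A"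
    using A by (simp add: reflect borel_left_translation)
qed

lemma distr_uminus_uminus:
  fixes N :: "'a::topological_group_add measure"
  assumes "sets N = sets borel"
  shows "distr (distr N borel uminus) borel uminus = N"
  using measurable_uminus_borel[OF assms] measurable_uminus_borel[of borel] assms
  by (simp add: distr_distr comp_def distr_id2)

theorem corollary1:
  assumes "locally_compact_group TYPE('a::{topological_group_add,t2_space})"
    and "approximable_by_finite_quasigroups TYPE('a)"
  shows "unimodular TYPE('a)"
proof -
  have lc: "locally_compact_space (euclidean :: 'a topology)"
    using assms(1) unfolding locally_compact_group_def .
  note left_imp_right = left_haar_imp_right_haar[OF lc assms(2)]
  have "left_haar_measure M" if right: "right_haar_measure M" for M :: "'a measure"
  proof -
    have "left_haar_measure (distr M borel uminus)"
      using right_haar_imp_left_haar_distr_uminus[OF right] .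
    then have "left_haar_measure (distr (distr M borel uminus) borel uminus)"
      using right_haar_imp_left_haar_distr_uminus[OF left_imp_right] by blast
    moreover have "sets M = sets borel"
      using right sets_radon unfolding right_haar_measure_def by blast
    ultimately show ?thesis
      by (simp add: distr_uminus_uminus)
  qed
  then show ?thesis
    unfolding unimodular_def using left_imp_right by blast
qed

end
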